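(* In the setting described in the context, for every $i\in\{1,\dots,N\}$ there exists a constant $\bar v\in\mathbb{R}^d$ such that $\lim_{t\to T_0^-}v_j(t)=\bar v$ for all $j\in[i]$.
   Context: Setting: $N,d\ge 1$, $\alpha\in(0,1)$, $\psi(s)=s^{-\alpha}$ ($s>0$), $\psi(0)=0$; $\psi_n(s)=\psi(s)$ for $s\ge(n-1)^{-1/\alpha}$, $\psi_n(s)=n$ for $s\le n^{-1/\alpha}$, smooth and monotone in between. Fix $T>0$ and initial data $x(0),v(0)\in\mathbb{R}^{Nd}$; let $x^n$ be the $C^2$ solution on $[0,T]$ of $\dot x^n_i=v^n_i$, $\dot v^n_i=\frac1N\sum_k(v^n_k-v^n_i)\psi_n(|x^n_i-x^n_k|)$ with these data. Pass to a subsequence (not relabeled) with $x^n\to x$ uniformly on $[0,T]$. Let $B_i(0)=\{k: x_k(0)\ne x_i(0)\text{ or }v_k(0)\ne v_i(0)\}$ and $T_0:=\inf\{t>0:\min_{i,\ j\in B_i(0)}\lim_{n}|x^n_i(t)-x^n_j(t)|=0\}$; assume $T_0\le T$. Assume moreover (after a further subsequence) that $x^n\to x$ in $C^1([0,t])$ for every $t<T_0$, and set $v=\dot x$ on $[0,T_0)$. Define $i\,\dot\sim\, j$ iff $j\notin B_i(0)$ or $\int_t^{T_0}\psi(|x_i(s)-x_j(s)|)ds=\infty$ for all $t<T_0$; let $\sim$ be the equivalence relation generated by $\dot\sim$ (its transitive closure), and $[i]$ the equivalence class of $i$. *)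

theory Defs
  imports "HOL-Analysis.Analysis"
begin

definition psi :: "real \<Rightarrow> real \<Rightarrow> real" where
  "psi \<alpha> s = (if s > 0 then s powr (- \<alpha>) else 0)"

definition smooth_on :: "real set \<Rightarrow> (real \<Rightarrow> real) \<Rightarrow> bool" where
  "smooth_on S f \<longleftrightarrow> (\<forall>k. ((deriv ^^ k) f) differentiable_on S)"

definition cutoff_family :: "real \<Rightarrow> (nat \<Rightarrow> real \<Rightarrow> real) \<Rightarrow> bool" where
  "cutoff_family \<alpha> psin \<longleftrightarrow>
     (\<forall>n\<ge>1. smooth_on {0<..} (psin n)
        \<and> (\<forall>s. 0 \<le> s \<and> s \<le> real n powr (-1/\<alpha>) \<longrightarrow> psin n s = real n)
        \<and> (n \<ge> 2 \<longrightarrow> (\<forall>s. s \<ge> real (n-1) powr (-1/\<alpha>) \<longrightarrow> psin n s = psi \<alpha> s))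
        \<and> (n \<ge> 2 \<longrightarrow> monotone_on {real n powr (-1/\<alpha>) .. real (n-1) powr (-1/\<alpha>)}
                           (\<le>) (\<ge>) (psin n)))"

definition Bset :: "nat \<Rightarrow> (nat \<Rightarrow> 'a) \<Rightarrow> (nat \<Rightarrow> 'a) \<Rightarrow> nat \<Rightarrow> nat set" where
  "Bset N x0 v0 i = {k. k < N \<and> (x0 k \<noteq> x0 i \<or> v0 k \<noteq> v0 i)}"

definition dotsim :: "nat \<Rightarrow> real \<Rightarrow> (nat \<Rightarrow> 'd::real_normed_vector) \<Rightarrow> (nat \<Rightarrow> 'd)
    \<Rightarrow> (nat \<Rightarrow> real \<Rightarrow> 'd) \<Rightarrow> real \<Rightarrow> (nat \<times> nat) set" where
  "dotsim N \<alpha> x0 v0 x T0 = {(i, j). i < N \<and> j < N \<and>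
      (j \<notin> Bset N x0 v0 i \<or>
       (\<forall>t\<in>{0..<T0}. (\<integral>\<^sup>+ s\<in>{t..T0}. ennreal (psi \<alpha> (norm (x i s - x j s))) \<partial>lborel) = \<infinity>))}"

definition eqclass :: "nat \<Rightarrow> real \<Rightarrow> (nat \<Rightarrow> 'd::real_normed_vector) \<Rightarrow> (nat \<Rightarrow> 'd)
    \<Rightarrow> (nat \<Rightarrow> real \<Rightarrow> 'd) \<Rightarrow> real \<Rightarrow> nat \<Rightarrow> nat set" where
  "eqclass N \<alpha> x0 v0 x T0 i =
     {j. j < N \<and> (i, j) \<in> (dotsim N \<alpha> x0 v0 x T0 \<union> (dotsim N \<alpha> x0 v0 x T0)\<inverse>)\<^sup>*}"

end

theory Submission
  imports Defs
begin

text \<open>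
  For each regularised system the interaction is symmetric, so for every convex \<open>g\<close> the sum
  \<open>\<Sum>\<^sub>p g (v\<^sub>p\<^sup>l)\<close> over one velocity coordinate is nonincreasing in time, and so is its
  limit along the subsequence. For \<open>g u = u\<^sup>2\<close> this bounds the limit velocities; for the ramps
  \<open>g u = (u - c)\<^sub>+\<^sup>2\<close>, taken for all \<open>c\<close>, it makes the sums of quadratic B-splines of the
  velocities converge as \<open>t \<rightarrow> T0\<close>. With only \<open>N\<close> particles this rules out oscillation: an oscillating
  coordinate would keep \<open>N + 1\<close> disjoint windows populated.

  The dissipation \<open>\<psi>\<^sub>n(|x\<^sub>i - x\<^sub>j|) (g' v\<^sub>i - g' v\<^sub>j) (v\<^sub>i - v\<^sub>j)\<close> of the Lyapunov sum bounds
  \<open>\<integral> \<psi>(|x\<^sub>i - x\<^sub>j|)\<close> up to \<open>T0\<close> whenever \<open>v\<^sub>i\<close> and \<open>v\<^sub>j\<close> have different limits, so \<open>i \<sim>\<^sup>. j\<close>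
  forces equal limits; if \<open>i\<close> and \<open>j\<close> share their initial data they even move together, by
  Gronwall. Equal limits then propagate along the generated equivalence relation.
\<close>

lemma at_within_Ico_at_left:
  fixes a b :: real
  assumes "a < b"
  shows "at b within {a..<b} = at_left b"
proof -
  have "{a..<b} - {b} = {a..b} - {b}" by auto
  then have "at b within {a..<b} = at b within {a..b}" by (simp add: at_within_def)
  then show ?thesis using at_within_Icc_at_left[OF assms] by simp
qed

lemma frequently_at_left_real:
  fixes b :: real
  shows "(\<exists>\<^sub>F t in at_left b. P t) \<longleftrightarrow> (\<forall>s<b. \<exists>t. s < t \<and> t < b \<and> P t)"
  unfolding frequently_def eventually_at_left_field by auto

lemma tendsto_at_left_if_antimono_bounded_below:
  fixes f :: "real \<Rightarrow> real"
  assumes ab: "a < b"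
    and antimono: "\<And>s t. a \<le> s \<Longrightarrow> s \<le> t \<Longrightarrow> t < b \<Longrightarrow> f t \<le> f s"
    and bounded: "\<And>t. a \<le> t \<Longrightarrow> t < b \<Longrightarrow> B \<le> f t"
  shows "\<exists>L. (f \<longlongrightarrow> L) (at_left b)"
proof -
  have "{..<b} \<inter> {a..} = {a..<b}" by auto
  moreover have "((\<lambda>t. - f t) \<longlongrightarrow> Sup ((\<lambda>t. - f t) ` ({..<b} \<inter> {a..})))
      (at b within ({..<b} \<inter> {a..}))"
    by (rule Lim_left_bound[where K = "- B"]) (use antimono bounded in auto)
  ultimately have "((\<lambda>t. - f t) \<longlongrightarrow> Sup ((\<lambda>t. - f t) ` {a..<b})) (at_left b)"
    by (simp add: at_within_Ico_at_left[OF ab])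
  then have "(f \<longlongrightarrow> - Sup ((\<lambda>t. - f t) ` {a..<b})) (at_left b)"
    by (simp add: tendsto_minus_cancel_left)
  then show ?thesis ..
qed

lemma bounded_tendsto_or_oscillates:
  fixes f :: "'a \<Rightarrow> real"
  assumes nontriv: "F \<noteq> bot" and bounded: "eventually (\<lambda>t. \<bar>f t\<bar> \<le> R) F"
  shows "(\<exists>w. (f \<longlongrightarrow> w) F) \<or>
    (\<exists>lo hi. lo < hi \<and> (\<exists>\<^sub>F t in F. f t < lo) \<and> (\<exists>\<^sub>F t in F. hi < f t))"
proof -
  define li where "li = Liminf F (\<lambda>t. ereal (f t))"
  define ls where "ls = Limsup F (\<lambda>t. ereal (f t))"
  have "li \<le> ls" unfolding li_def ls_def by (rule Liminf_le_Limsup) (use nontriv in simp)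
  have "ereal (- R) \<le> li" unfolding li_def
    by (rule Liminf_bounded) (use bounded in \<open>auto elim!: eventually_mono\<close>)
  have "ls \<le> ereal R" unfolding ls_def
    by (rule Limsup_bounded) (use bounded in \<open>auto elim!: eventually_mono\<close>)
  show ?thesis
  proof (cases "li = ls")
    case True
    obtain w where w: "li = ereal w"
      using \<open>ereal (- R) \<le> li\<close> \<open>ls \<le> ereal R\<close> True by (cases li) auto
    have "((\<lambda>t. ereal (f t)) \<longlongrightarrow> li) F"
      using True nontriv unfolding li_def ls_def by (subst tendsto_iff_Liminf_eq_Limsup) auto
    then have "(f \<longlongrightarrow> w) F" by (simp add: w)
    then show ?thesis by blast
  next
    case False
    with \<open>li \<le> ls\<close> have "li < ls" by simp
    then obtain lo where "li < ereal lo" "ereal lo < ls" using ereal_dense2 by blast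
    then obtain hi where "ereal lo < ereal hi" "ereal hi < ls" using ereal_dense2 by blast
    then have "lo < hi" by simp
    moreover have "\<exists>\<^sub>F t in F. f t < lo"
    proof (rule ccontr)
      assume "\<not> (\<exists>\<^sub>F t in F. f t < lo)"
      then have "ereal lo \<le> li" unfolding li_def not_frequently
        by (intro Liminf_bounded) (auto elim!: eventually_mono)
      with \<open>li < ereal lo\<close> show False by simp
    qed
    moreover have "\<exists>\<^sub>F t in F. hi < f t"
    proof (rule ccontr)
      assume "\<not> (\<exists>\<^sub>F t in F. hi < f t)"
      then have "ls \<le> ereal hi" unfolding ls_def not_frequently
        by (intro Limsup_bounded) (auto elim!: eventually_mono)
      with \<open>ereal hi < ls\<close> show False by simp
    qed
    ultimately show ?thesis by blast
  qed
qed

lemma frequently_eq_at_left_if_oscillates: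
  fixes f :: "real \<Rightarrow> real"
  assumes ab: "a < b" and cont: "\<And>t. t < b \<Longrightarrow> continuous_on {a..t} f"
    and below: "\<exists>\<^sub>F t in at_left b. f t < lo" and above: "\<exists>\<^sub>F t in at_left b. hi < f t"
    and m: "lo < m" "m < hi"
  shows "\<exists>\<^sub>F t in at_left b. f t = m"
  unfolding frequently_at_left_real
proof (intro allI impI)
  fix s assume "s < b"
  with ab have "max s a < b" by simp
  then obtain t1 where t1: "max s a < t1" "t1 < b" "f t1 < lo"
    using below unfolding frequently_at_left_real by blast
  then obtain t2 where t2: "t1 < t2" "t2 < b" "hi < f t2"
    using above unfolding frequently_at_left_real by blast
  have "continuous_on {t1..t2} f"
    by (rule continuous_on_subset[OF cont[OF t2(2)]]) (use t1 in auto)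
  then obtain t where "t1 \<le> t" "t \<le> t2" "f t = m"
    using IVT'[of f t1 m t2] t1 t2 m by auto
  then show "\<exists>t. s < t \<and> t < b \<and> f t = m" using t1 t2 by (intro exI[of _ t]) auto
qed

definition ramp2 :: "real \<Rightarrow> real \<Rightarrow> real" where
  "ramp2 c u = (max (u - c) 0)\<^sup>2"

lemma ramp2_nonneg: "0 \<le> ramp2 c u"
  by (simp add: ramp2_def)

lemma has_real_derivative_ramp2: "(ramp2 c has_real_derivative 2 * max (u - c) 0) (at u)"
proof -
  consider "c < u" | "u < c" | "u = c" by linarith
  then show ?thesis
  proof cases
    case 1
    have "((\<lambda>u. (u - c)\<^sup>2) has_real_derivative 2 * (u - c)) (at u)"
      by (auto intro!: derivative_eq_intros)
    then have "(ramp2 c has_real_derivative 2 * (u - c)) (at u)"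
      by (rule has_field_derivative_transform_within_open[of _ _ _ "{c<..}"])
         (use 1 in \<open>auto simp: ramp2_def\<close>)
    then show ?thesis using 1 by simp
  next
    case 2
    have "((\<lambda>u. 0) has_real_derivative 0) (at u)" by simp
    then have "(ramp2 c has_real_derivative 0) (at u)"
      by (rule has_field_derivative_transform_within_open[of _ _ _ "{..<c}"])
         (use 2 in \<open>auto simp: ramp2_def\<close>)
    then show ?thesis using 2 by simp
  next
    case 3
    have "norm ((ramp2 c (u + h) - ramp2 c u) / h) \<le> norm h" for h
      using 3 by (cases "0 < h") (simp_all add: ramp2_def power2_eq_square)
    then have "\<forall>\<^sub>F h in at 0. norm ((ramp2 c (u + h) - ramp2 c u) / h) \<le> norm h"
      by simp
    then have "(\<lambda>h. (ramp2 c (u + h) - ramp2 c u) / h) \<midarrow>0\<rightarrow> 0"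
      by (rule Lim_null_comparison) (rule tendsto_norm_zero[OF tendsto_ident_at])
    then show ?thesis using 3 by (simp add: DERIV_def)
  qed
qed

lemma mono_ramp2_derivative: "mono (\<lambda>u. 2 * max (u - c) (0::real))"
  by (auto simp: mono_def)

text \<open>The third difference of ramps is the quadratic B-spline supported on \<open>[c, c + 3h]\<close>.\<close>

definition quad_spline :: "real \<Rightarrow> real \<Rightarrow> real \<Rightarrow> real" where
  "quad_spline c h u = ramp2 c u - 3 * ramp2 (c + h) u + 3 * ramp2 (c + 2 * h) u - ramp2 (c + 3 * h) u"

lemma quad_spline_eq_0_outside:
  assumes "0 < h" and "u \<le> c \<or> c + 3 * h \<le> u"
  shows "quad_spline c h u = 0"
  using assms
proof (elim disjE)
  assume "u \<le> c"
  with \<open>0 < h\<close> show ?thesis by (simp add: quad_spline_def ramp2_def)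
next
  assume "c + 3 * h \<le> u"
  with \<open>0 < h\<close> show ?thesis
    by (simp add: quad_spline_def ramp2_def power2_eq_square algebra_simps)
qed

lemma quad_spline_pos_imp_inside:
  assumes "0 < h" and "0 < quad_spline c h u"
  shows "c < u \<and> u < c + 3 * h"
proof (rule ccontr)
  assume "\<not> (c < u \<and> u < c + 3 * h)"
  then have "u \<le> c \<or> c + 3 * h \<le> u" by linarith
  then show False using assms quad_spline_eq_0_outside by simp
qed

lemma quad_spline_nonneg:
  assumes h: "0 < h"
  shows "0 \<le> quad_spline c h u"
proof -
  consider "u \<le> c \<or> c + 3 * h \<le> u" | "c \<le> u" "u \<le> c + h" | "c + h \<le> u" "u \<le> c + 2 * h"
    | "c + 2 * h \<le> u" "u \<le> c + 3 * h" by linarith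
  then show ?thesis
  proof cases
    case 1
    then show ?thesis using quad_spline_eq_0_outside[OF h] by simp
  next
    case 2
    then show ?thesis using h by (simp add: quad_spline_def ramp2_def)
  next
    case 3
    then have "quad_spline c h u = h\<^sup>2 + 2 * ((u - c - h) * (c + 2 * h - u))"
      using h by (simp add: quad_spline_def ramp2_def power2_eq_square algebra_simps)
    moreover have "0 \<le> (u - c - h) * (c + 2 * h - u)" using 3 by simp
    ultimately show ?thesis by simp
  next
    case 4
    then have "quad_spline c h u = (c + 3 * h - u)\<^sup>2"
      using h by (simp add: quad_spline_def ramp2_def power2_eq_square algebra_simps)
    then show ?thesis by simp
  qed
qed

lemma quad_spline_midpoint: "0 < h \<Longrightarrow> quad_spline c h (c + 3 * h / 2) = 3 / 2 * h\<^sup>2"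
  by (simp add: quad_spline_def ramp2_def power2_eq_square)

lemma quad_spline_sum_tendsto_if_ramp_sums_tendsto:
  fixes y :: "'i \<Rightarrow> 'a \<Rightarrow> real"
  assumes ramp: "\<And>c. \<exists>L. ((\<lambda>t. \<Sum>p\<in>P. ramp2 c (y p t)) \<longlongrightarrow> L) F"
  shows "\<exists>L. ((\<lambda>t. \<Sum>p\<in>P. quad_spline c h (y p t)) \<longlongrightarrow> L) F"
proof -
  obtain L0 L1 L2 L3 where
    "((\<lambda>t. \<Sum>p\<in>P. ramp2 c (y p t)) \<longlongrightarrow> L0) F"
    "((\<lambda>t. \<Sum>p\<in>P. ramp2 (c + h) (y p t)) \<longlongrightarrow> L1) F"
    "((\<lambda>t. \<Sum>p\<in>P. ramp2 (c + 2 * h) (y p t)) \<longlongrightarrow> L2) F"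
    "((\<lambda>t. \<Sum>p\<in>P. ramp2 (c + 3 * h) (y p t)) \<longlongrightarrow> L3) F"
    using ramp by meson
  moreover have "(\<lambda>t. \<Sum>p\<in>P. quad_spline c h (y p t)) = (\<lambda>t. (\<Sum>p\<in>P. ramp2 c (y p t))
      - 3 * (\<Sum>p\<in>P. ramp2 (c + h) (y p t)) + 3 * (\<Sum>p\<in>P. ramp2 (c + 2 * h) (y p t))
      - (\<Sum>p\<in>P. ramp2 (c + 3 * h) (y p t)))"
    by (simp add: quad_spline_def sum.distrib sum_subtractf sum_distrib_left)
  ultimately have "((\<lambda>t. \<Sum>p\<in>P. quad_spline c h (y p t)) \<longlongrightarrow> L0 - 3 * L1 + 3 * L2 - L3) F"
    by (simp only:) (intro tendsto_intros)
  then show ?thesis ..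
qed

lemma eventually_quad_spline_sum_pos_if_frequently_centred:
  fixes y :: "'i \<Rightarrow> 'a \<Rightarrow> real"
  assumes P: "finite P" "i \<in> P" and h: "0 < h"
    and lim: "((\<lambda>t. \<Sum>p\<in>P. quad_spline c h (y p t)) \<longlongrightarrow> L) F"
    and centred: "\<exists>\<^sub>F t in F. y i t = c + 3 * h / 2"
  shows "eventually (\<lambda>t. 0 < (\<Sum>p\<in>P. quad_spline c h (y p t))) F"
proof -
  define \<beta> where "\<beta> = 3 / 2 * h\<^sup>2"
  have peak: "\<beta> \<le> (\<Sum>p\<in>P. quad_spline c h (y p t))" if "y i t = c + 3 * h / 2" for t
    using member_le_sum[OF P(2), of "\<lambda>p. quad_spline c h (y p t)", OF _ P(1)]
      quad_spline_nonneg[OF h] quad_spline_midpoint[OF h] that by (simp add: \<beta>_def)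
  have "\<beta> \<le> L"
  proof (rule ccontr)
    assume "\<not> \<beta> \<le> L"
    then have "eventually (\<lambda>t. (\<Sum>p\<in>P. quad_spline c h (y p t)) < \<beta>) F"
      by (intro order_tendstoD(2)[OF lim]) simp
    then have "eventually (\<lambda>t. y i t \<noteq> c + 3 * h / 2) F"
      by (rule eventually_mono) (use peak in force)
    with centred show False by (simp add: frequently_def)
  qed
  moreover have "0 < \<beta>" using h by (simp add: \<beta>_def)
  ultimately show ?thesis using order_tendstoD(1)[OF lim, of 0] by simp
qed

lemma less_card_if_quad_spline_sums_pos:
  fixes z :: "'i \<Rightarrow> real" and K :: nat
  assumes "finite P" and h: "0 < h"
    and pos: "\<And>k. k \<le> K \<Longrightarrow> 0 < (\<Sum>p\<in>P. quad_spline (c + 3 * h * real k) h (z p))"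
  shows "K < card P"
proof -
  have "\<exists>p\<in>P. 0 < quad_spline (c + 3 * h * real k) h (z p)" if "k \<le> K" for k
    using pos[OF that] sum_nonpos[of P "\<lambda>p. quad_spline (c + 3 * h * real k) h (z p)"] by force
  then obtain p where p: "\<And>k. k \<le> K \<Longrightarrow> p k \<in> P \<and> 0 < quad_spline (c + 3 * h * real k) h (z (p k))"
    by metis
  have disjoint: "p k \<noteq> p k'" if "k < k'" "k' \<le> K" for k k'
  proof -
    have "3 * h * (real k + 1) \<le> 3 * h * real k'" using that h by (intro mult_left_mono) auto
    then have "c + 3 * h * real k + 3 * h \<le> c + 3 * h * real k'" by (simp add: distrib_left)
    moreover have "z (p k) < c + 3 * h * real k + 3 * h" "c + 3 * h * real k' < z (p k')"
      using quad_spline_pos_imp_inside[OF h] p[of k] p[of k'] that by auto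
    ultimately show ?thesis by auto
  qed
  have "inj_on p {..K}"
  proof (rule inj_onI)
    fix k k' assume "k \<in> {..K}" "k' \<in> {..K}" "p k = p k'"
    then show "k = k'" using disjoint[of k k'] disjoint[of k' k] by (cases k k' rule: linorder_cases) auto
  qed
  then have "card {..K} \<le> card P"
    using p by (intro card_inj_on_le[OF _ _ \<open>finite P\<close>]) auto
  then show ?thesis by simp
qed

text \<open>If \<open>y i\<close> oscillated between \<open>lo < hi\<close>, each of \<open>card P + 1\<close> disjoint windows in \<open>(lo, hi)\<close>
  would eventually contain some \<open>y p\<close>: the spline sum of a window converges, and its limit is at
  least the peak of the spline because \<open>y i\<close> crosses the window's centre arbitrarily close to \<open>b\<close>.\<close>

lemma tendsto_at_left_if_ramp_sums_antimono:
  fixes y :: "'i \<Rightarrow> real \<Rightarrow> real"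
  assumes P: "finite P" "i \<in> P" and ab: "a < b"
    and cont: "\<And>p t. p \<in> P \<Longrightarrow> t < b \<Longrightarrow> continuous_on {a..t} (y p)"
    and bounded: "\<And>p t. p \<in> P \<Longrightarrow> a \<le> t \<Longrightarrow> t < b \<Longrightarrow> \<bar>y p t\<bar> \<le> R"
    and antimono: "\<And>c s t. a \<le> s \<Longrightarrow> s \<le> t \<Longrightarrow> t < b \<Longrightarrow>
                     (\<Sum>p\<in>P. ramp2 c (y p t)) \<le> (\<Sum>p\<in>P. ramp2 c (y p s))"
  shows "\<exists>w. (y i \<longlongrightarrow> w) (at_left b)"
proof (rule ccontr)
  assume diverges: "\<nexists>w. (y i \<longlongrightarrow> w) (at_left b)"
  have "eventually (\<lambda>t. \<bar>y i t\<bar> \<le> R) (at_left b)"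
    unfolding eventually_at_left_field using ab bounded P(2) by (intro exI[of _ a]) auto
  then obtain lo hi where "lo < hi"
    and below: "\<exists>\<^sub>F t in at_left b. y i t < lo" and above: "\<exists>\<^sub>F t in at_left b. hi < y i t"
    using bounded_tendsto_or_oscillates[OF trivial_limit_at_left_real] diverges by blast
  define h where "h = (hi - lo) / (3 * (card P + 1))"
  have h: "0 < h" unfolding h_def using \<open>lo < hi\<close> by simp
  have ramp_sum_converges: "\<exists>L. ((\<lambda>t. \<Sum>p\<in>P. ramp2 c (y p t)) \<longlongrightarrow> L) (at_left b)" for c
    by (rule tendsto_at_left_if_antimono_bounded_below[OF ab antimono, where B = 0])
       (auto intro: sum_nonneg ramp2_nonneg)
  have spline_sum_converges: "\<exists>L. ((\<lambda>t. \<Sum>p\<in>P. quad_spline c h (y p t)) \<longlongrightarrow> L) (at_left b)" for c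
    using quad_spline_sum_tendsto_if_ramp_sums_tendsto ramp_sum_converges by blast
  have populated: "eventually (\<lambda>t. 0 < (\<Sum>p\<in>P. quad_spline (lo + 3 * h * real k) h (y p t))) (at_left b)"
    if "k \<le> card P" for k
  proof -
    have "3 * h * real k \<le> 3 * h * card P" using that h by (intro mult_left_mono) auto
    moreover have "3 * h * card P + 3 * h = hi - lo"
    proof -
      have "3 * h * (card P + 1) = hi - lo" unfolding h_def by (simp add: field_simps)
      then show ?thesis by (simp add: algebra_simps)
    qed
    moreover have "0 \<le> 3 * h * real k" using h by simp
    ultimately have "lo < lo + 3 * h * real k + 3 * h / 2" "lo + 3 * h * real k + 3 * h / 2 < hi"
      using h by linarith+
    then have "\<exists>\<^sub>F t in at_left b. y i t = lo + 3 * h * real k + 3 * h / 2"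
      by (intro frequently_eq_at_left_if_oscillates[OF ab cont[OF P(2)] below above])
    with spline_sum_converges show ?thesis
      using eventually_quad_spline_sum_pos_if_frequently_centred[OF P h] by blast
  qed
  have "eventually (\<lambda>t. \<forall>k\<in>{..card P}. 0 < (\<Sum>p\<in>P. quad_spline (lo + 3 * h * real k) h (y p t))) (at_left b)"
    using populated by (intro eventually_ball_finite) auto
  then obtain t where "\<forall>k\<in>{..card P}. 0 < (\<Sum>p\<in>P. quad_spline (lo + 3 * h * real k) h (y p t))"
    using eventually_happens'[OF trivial_limit_at_left_real] by blast
  then have "card P < card P"
    by (intro less_card_if_quad_spline_sums_pos[OF P(1) h]) auto
  then show False by simp
qed

lemma antimono_if_has_real_derivative_nonpos_within:
  fixes f :: "real \<Rightarrow> real"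
  assumes der: "\<And>r. r \<in> {a..b} \<Longrightarrow> \<exists>D. (f has_real_derivative D) (at r within {a..b}) \<and> D \<le> 0"
    and st: "a \<le> s" "s \<le> t" "t \<le> b"
  shows "f t \<le> f s"
proof (rule DERIV_nonpos_imp_decreasing_open[OF st(2)])
  fix r assume r: "s < r" "r < t"
  then have "at r within {a..b} = at r" using st by (intro at_within_interior) auto
  then show "\<exists>D. (f has_real_derivative D) (at r) \<and> D \<le> 0" using der[of r] r st by auto
next
  have "continuous_on {a..b} f"
    using der DERIV_continuous continuous_on_eq_continuous_within by blast
  then show "continuous_on {s..t} f" by (rule continuous_on_subset) (use st in auto)
qed

lemma mono_diff_mult_nonneg:
  fixes h :: "real \<Rightarrow> real"
  assumes "mono h"
  shows "0 \<le> (h u - h w) * (u - w)"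
  using monoD[OF assms, of u w] monoD[OF assms, of w u]
  by (cases "u \<le> w") (auto intro: mult_nonpos_nonpos)

text \<open>Symmetrising the double sum turns it into \<open>-1/2 \<Sum>\<Sum> a p k (h (y p) - h (y k)) (y p - y k)\<close>,
  all of whose terms are nonnegative.\<close>

lemma consensus_dissipation:
  fixes a :: "'i \<Rightarrow> 'i \<Rightarrow> real" and y :: "'i \<Rightarrow> real" and h :: "real \<Rightarrow> real"
  assumes P: "finite P" "i \<in> P" "j \<in> P" and "mono h"
    and sym: "\<And>p q. p \<in> P \<Longrightarrow> q \<in> P \<Longrightarrow> a p q = a q p"
    and nonneg: "\<And>p q. p \<in> P \<Longrightarrow> q \<in> P \<Longrightarrow> 0 \<le> a p q"
  shows "(\<Sum>p\<in>P. h (y p) * (\<Sum>k\<in>P. a p k * (y k - y p)))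
           \<le> - (a i j * ((h (y i) - h (y j)) * (y i - y j))) / 2"
proof -
  define d where "d p k = a p k * ((h (y p) - h (y k)) * (y p - y k))" for p k
  define S where "S = (\<Sum>p\<in>P. \<Sum>k\<in>P. a p k * h (y p) * (y k - y p))"
  have lhs: "(\<Sum>p\<in>P. h (y p) * (\<Sum>k\<in>P. a p k * (y k - y p))) = S"
    unfolding S_def by (simp add: sum_distrib_left algebra_simps)
  have "S = (\<Sum>k\<in>P. \<Sum>p\<in>P. a p k * h (y p) * (y k - y p))"
    unfolding S_def by (rule sum.swap)
  also have "\<dots> = (\<Sum>p\<in>P. \<Sum>k\<in>P. a p k * h (y k) * (y p - y k))"
    using sym by (intro sum.cong refl) auto
  finally have "2 * S = (\<Sum>p\<in>P. \<Sum>k\<in>P. a p k * h (y p) * (y k - y p) + a p k * h (y k) * (y p - y k))"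
    unfolding S_def by (simp add: sum.distrib)
  also have "\<dots> = - (\<Sum>p\<in>P. \<Sum>k\<in>P. d p k)"
    unfolding d_def by (simp add: sum_negf[symmetric] algebra_simps)
  finally have S: "2 * S = - (\<Sum>p\<in>P. \<Sum>k\<in>P. d p k)" .
  have d_nonneg: "0 \<le> d p k" if "p \<in> P" "k \<in> P" for p k
    unfolding d_def using nonneg[OF that] mono_diff_mult_nonneg[OF \<open>mono h\<close>] by simp
  have "d i j \<le> (\<Sum>k\<in>P. d i k)"
    by (rule member_le_sum) (use P d_nonneg in auto)
  also have "\<dots> \<le> (\<Sum>p\<in>P. \<Sum>k\<in>P. d p k)"
    by (rule member_le_sum) (use P d_nonneg in \<open>auto intro: sum_nonneg\<close>)
  finally show ?thesis using S lhs unfolding d_def by linarith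
qed

lemma gronwall_zero:
  fixes D D' :: "real \<Rightarrow> real"
  assumes der: "\<And>t. t \<in> {a..b} \<Longrightarrow> (D has_real_derivative D' t) (at t within {a..b})"
    and le: "\<And>t. t \<in> {a..b} \<Longrightarrow> D' t \<le> K * D t"
    and D0: "D a = 0" and nonneg: "\<And>t. t \<in> {a..b} \<Longrightarrow> 0 \<le> D t"
    and t: "t \<in> {a..b}"
  shows "D t = 0"
proof -
  define E where "E t = exp (- K * t) * D t" for t
  have "\<exists>E'. (E has_real_derivative E') (at r within {a..b}) \<and> E' \<le> 0" if r: "r \<in> {a..b}" for r
  proof (intro exI conjI)
    show "(E has_real_derivative exp (- K * r) * (D' r - K * D r)) (at r within {a..b})"
      unfolding E_def by (rule derivative_eq_intros der[OF r] refl | simp add: algebra_simps)+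
    show "exp (- K * r) * (D' r - K * D r) \<le> 0"
      using le[OF r] by (simp add: mult_nonneg_nonpos)
  qed
  then have "E t \<le> E a"
    by (rule antimono_if_has_real_derivative_nonpos_within) (use t in auto)
  then have "D t \<le> 0" using D0 by (simp add: E_def mult_le_0_iff)
  with nonneg[OF t] show ?thesis by simp
qed

lemma incseq_tendsto_from_below:
  fixes s b :: real
  assumes "s < b"
  obtains t where "incseq t" "\<And>k. s < t k" "\<And>k. t k < b" "t \<longlonglongrightarrow> b"
proof
  define t where "t k = b - (b - s) / real (k + 2)" for k
  show "s < t k" "t k < b" for k
  proof -
    have "(b - s) / real (k + 2) < (b - s) / 1" using assms by (intro divide_strict_left_mono) auto
    then show "s < t k" "t k < b" using assms by (auto simp: t_def)
  qed
  show "incseq t"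
    using assms by (intro incseq_SucI) (simp add: t_def frac_le)
  have "(\<lambda>k. (b - s) / real (k + 2)) \<longlonglongrightarrow> 0"
    using LIMSEQ_ignore_initial_segment[OF lim_const_over_n[of "b - s"], of 2] by simp
  then show "t \<longlonglongrightarrow> b" unfolding t_def using tendsto_diff[OF tendsto_const] by fastforce
qed

lemma integrable_on_Icc_if_bounded_integrals:
  fixes f :: "real \<Rightarrow> real"
  assumes "s < b" and nonneg: "\<And>r. 0 \<le> f r"
    and cont: "\<And>t. s < t \<Longrightarrow> t < b \<Longrightarrow> continuous_on {s..t} f"
    and bounded: "\<And>t. s < t \<Longrightarrow> t < b \<Longrightarrow> integral {s..t} f \<le> C"
  shows "f integrable_on {s..b}"
proof -
  obtain t where "incseq t" and t: "\<And>k. s < t k" "\<And>k. t k < b" and "t \<longlonglongrightarrow> b"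
    using incseq_tendsto_from_below[OF \<open>s < b\<close>] by blast
  define g where "g k r = (if r \<in> {s..t k} then f r else 0)" for k r
  define g_lim where "g_lim r = (if r \<in> {s..<b} then f r else 0)" for r
  have f_integrable: "f integrable_on {s..t k}" for k
    using cont[OF t] by (rule integrable_continuous_interval)
  have restrict: "{s..t k} \<inter> {s..b} = {s..t k}" for k using t(2)[of k] by auto
  have "g_lim integrable_on {s..b} \<and> ((\<lambda>k. integral {s..b} (g k)) \<longlonglongrightarrow> integral {s..b} g_lim)"
  proof (rule monotone_convergence_increasing)
    show "g k integrable_on {s..b}" for k
      unfolding g_def integrable_restrict_Int restrict by (rule f_integrable)
    show "g k r \<le> g (Suc k) r" for k r
      using incseqD[OF \<open>incseq t\<close>, of k "Suc k"] nonneg[of r] by (auto simp: g_def)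
    show "(\<lambda>k. g k r) \<longlonglongrightarrow> g_lim r" if "r \<in> {s..b}" for r
    proof (cases "r < b")
      case True
      then have "eventually (\<lambda>k. r < t k) sequentially" by (rule order_tendstoD(1)[OF \<open>t \<longlonglongrightarrow> b\<close>])
      then have "eventually (\<lambda>k. g k r = g_lim r) sequentially"
        by eventually_elim (use that True in \<open>auto simp: g_def g_lim_def\<close>)
      then show ?thesis by (rule tendsto_eventually)
    next
      case False
      then have "g k r = 0" for k using t(2)[of k] by (simp add: g_def)
      then show ?thesis using False by (simp add: g_lim_def)
    qed
    have "integral {s..b} (g k) = integral {s..t k} f" for k
      unfolding g_def integral_restrict_Int restrict ..
    then have "norm (integral {s..b} (g k)) \<le> \<bar>C\<bar>" for k
      using bounded[OF t, of k] integral_nonneg[OF f_integrable, of k] nonneg by simp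
    then show "bounded (range (\<lambda>k. integral {s..b} (g k)))"
      by (intro boundedI[where B = "\<bar>C\<bar>"]) auto
  qed
  then show ?thesis
    by (intro integrable_spike_finite[of "{b}" _ f g_lim]) (auto simp: g_lim_def)
qed

lemma nn_integral_Icc_finite_if_bounded_integrals:
  fixes f :: "real \<Rightarrow> real"
  assumes "s < b" and nonneg: "\<And>r. 0 \<le> f r"
    and "\<And>t. s < t \<Longrightarrow> t < b \<Longrightarrow> continuous_on {s..t} f"
    and "\<And>t. s < t \<Longrightarrow> t < b \<Longrightarrow> integral {s..t} f \<le> C"
  shows "(\<integral>\<^sup>+ r\<in>{s..b}. ennreal (f r) \<partial>lborel) \<noteq> \<infinity>"
proof -
  have "f integrable_on {s..b}" using assms by (rule integrable_on_Icc_if_bounded_integrals)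
  then have "(\<integral>\<^sup>+ r. indicator {s..b} r * f r \<partial>lborel) = integral {s..b} f"
    using nonneg by (intro nn_integral_has_integral_lebesgue) auto
  moreover have "(\<integral>\<^sup>+ r\<in>{s..b}. ennreal (f r) \<partial>lborel) = (\<integral>\<^sup>+ r. indicator {s..b} r * f r \<partial>lborel)"
    by (rule nn_integral_cong) (simp add: indicator_def)
  ultimately show ?thesis by simp
qed

lemma abs_norm_diff_diff_le:
  fixes a b a' b' :: "'a::real_normed_vector"
  shows "\<bar>norm (a - b) - norm (a' - b')\<bar> \<le> norm (a - a') + norm (b - b')"
proof -
  have "\<bar>norm (a - b) - norm (a' - b')\<bar> \<le> norm ((a - a') - (b - b'))"
    using norm_triangle_ineq3[of "a - b" "a' - b'"] by (simp add: algebra_simps)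
  also have "\<dots> \<le> norm (a - a') + norm (b - b')" by (rule norm_triangle_ineq4)
  finally show ?thesis .
qed

lemma psi_ge_half_if_le_double:
  assumes "0 \<le> \<alpha>" "\<alpha> \<le> 1" and d: "0 < d'" "d' \<le> 2 * d"
  shows "psi \<alpha> d / 2 \<le> psi \<alpha> d'"
proof -
  have "(1 / 2) * d powr (- \<alpha>) \<le> 2 powr (- \<alpha>) * d powr (- \<alpha>)"
    using powr_mono[of "-1" "- \<alpha>" 2] assms by (intro mult_right_mono) (auto simp: powr_minus_divide)
  also have "\<dots> = (2 * d) powr (- \<alpha>)" using d by (simp add: powr_mult)
  also have "\<dots> \<le> d' powr (- \<alpha>)" using assms by (intro powr_mono2') auto
  finally show ?thesis using d by (simp add: psi_def)
qed

lemma lipschitz_on_Icc_if_const_near_0: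
  fixes f f' :: "real \<Rightarrow> real"
  assumes \<delta>: "0 < \<delta>" and const: "\<And>s. 0 \<le> s \<Longrightarrow> s \<le> \<delta> \<Longrightarrow> f s = f \<delta>"
    and der: "\<And>s. 0 < s \<Longrightarrow> (f has_real_derivative f' s) (at s)"
    and cont: "continuous_on {0<..} f'"
  shows "\<exists>L. L-lipschitz_on {0..R} f"
proof -
  define R' where "R' = max \<delta> R"
  have "compact (f' ` {\<delta>..R'})"
    by (rule compact_continuous_image[OF continuous_on_subset[OF cont]]) (use \<delta> in auto)
  then have "bounded (f' ` {\<delta>..R'})" by (rule compact_imp_bounded)
  then obtain M where M: "\<And>s. s \<in> {\<delta>..R'} \<Longrightarrow> \<bar>f' s\<bar> \<le> M"
    unfolding bounded_real by blast
  have "0 \<le> M" using M[of \<delta>] by (simp add: R'_def)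
  have clamp: "f s = f (max s \<delta>)" if "0 \<le> s" for s
    using const[OF that] by (cases "s \<le> \<delta>") (auto simp: max_def)
  have "M-lipschitz_on {0..R} f"
  proof (rule lipschitz_on_leI[OF _ \<open>0 \<le> M\<close>])
    fix a b assume ab: "a \<in> {0..R}" "b \<in> {0..R}" "a \<le> b"
    show "dist (f a) (f b) \<le> M * dist a b"
    proof (cases "max a \<delta> < max b \<delta>")
      case True
      then obtain z where z: "max a \<delta> < z" "z < max b \<delta>"
          "f (max b \<delta>) - f (max a \<delta>) = (max b \<delta> - max a \<delta>) * f' z"
        using MVT2[OF True, of f f'] der \<delta> by force
      have "\<bar>f' z\<bar> \<le> M" using M z ab by (auto simp: R'_def)
      have "\<bar>f (max b \<delta>) - f (max a \<delta>)\<bar> = (max b \<delta> - max a \<delta>) * \<bar>f' z\<bar>"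
        unfolding z(3) using True by (simp add: abs_mult)
      also have "\<dots> \<le> (b - a) * M"
        by (rule mult_mono) (use \<open>\<bar>f' z\<bar> \<le> M\<close> ab True in auto)
      finally have "\<bar>f (max b \<delta>) - f (max a \<delta>)\<bar> \<le> (b - a) * M" .
      then show ?thesis using clamp[of a] clamp[of b] ab by (simp add: dist_real_def abs_minus_commute mult.commute)
    next
      case False
      then have "max a \<delta> = max b \<delta>" using ab by auto
      then show ?thesis using clamp[of a] clamp[of b] ab \<open>0 \<le> M\<close> by (simp add: dist_real_def)
    qed
  qed
  then show ?thesis by blast
qed

lemma finite_family_bounded_on_compact:
  fixes f :: "'k \<Rightarrow> 'b::metric_space \<Rightarrow> 'a::real_normed_vector"
  assumes "finite K" "compact S" "\<And>k. k \<in> K \<Longrightarrow> continuous_on S (f k)"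
  shows "\<exists>B. \<forall>k\<in>K. \<forall>t\<in>S. norm (f k t) \<le> B"
proof -
  have "bounded (\<Union>k\<in>K. f k ` S)"
    using assms by (intro bounded_UN ballI compact_imp_bounded compact_continuous_image) auto
  then show ?thesis unfolding bounded_iff by blast
qed

lemma interaction_diff_le:
  fixes X V :: "'k \<Rightarrow> 'a::real_normed_vector" and \<phi> :: "real \<Rightarrow> real"
  assumes "finite K" and lip: "L-lipschitz_on {0..R} \<phi>"
    and dist: "\<And>k. k \<in> K \<Longrightarrow> norm (X i - X k) \<le> R" "\<And>k. k \<in> K \<Longrightarrow> norm (X j - X k) \<le> R"
    and vel: "\<And>k. k \<in> K \<Longrightarrow> norm (V k) \<le> B" "norm (V i) \<le> B"
  shows "norm ((\<Sum>k\<in>K. \<phi> (norm (X i - X k)) *\<^sub>R (V k - V i)) - (\<Sum>k\<in>K. \<phi> (norm (X j - X k)) *\<^sub>R (V k - V j)))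
    \<le> card K * (2 * B * L * norm (X i - X j) + (\<bar>\<phi> 0\<bar> + L * R) * norm (V i - V j))"
proof -
  have "0 \<le> L" using lip by (rule lipschitz_on_nonneg)
  have "norm (\<phi> (norm (X i - X k)) *\<^sub>R (V k - V i) - \<phi> (norm (X j - X k)) *\<^sub>R (V k - V j))
      \<le> 2 * B * L * norm (X i - X j) + (\<bar>\<phi> 0\<bar> + L * R) * norm (V i - V j)" if k: "k \<in> K" for k
  proof -
    define a b where "a = \<phi> (norm (X i - X k))" and "b = \<phi> (norm (X j - X k))"
    have "\<bar>a - b\<bar> \<le> L * \<bar>norm (X i - X k) - norm (X j - X k)\<bar>"
      unfolding a_def b_def using lipschitz_onD[OF lip] dist k by (simp add: dist_real_def)
    also have "\<dots> \<le> L * norm (X i - X j)"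
      using norm_triangle_ineq3[of "X i - X k" "X j - X k"] \<open>0 \<le> L\<close> by (simp add: mult_left_mono)
    finally have ab: "\<bar>a - b\<bar> \<le> L * norm (X i - X j)" .
    have "\<bar>b - \<phi> 0\<bar> \<le> L * norm (X j - X k)"
      unfolding b_def using lipschitz_onD[OF lip, of _ 0] dist(2)[OF k] by (simp add: dist_real_def)
    also have "\<dots> \<le> L * R" using dist(2)[OF k] \<open>0 \<le> L\<close> by (rule mult_left_mono)
    finally have "\<bar>b - \<phi> 0\<bar> \<le> L * R" .
    then have b: "\<bar>b\<bar> \<le> \<bar>\<phi> 0\<bar> + L * R" by linarith
    then have "0 \<le> \<bar>\<phi> 0\<bar> + L * R" by linarith
    have "norm (V k - V i) \<le> 2 * B"
      using norm_triangle_ineq4[of "V k" "V i"] vel(1)[OF k] vel(2) by linarith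
    have "a *\<^sub>R (V k - V i) - b *\<^sub>R (V k - V j) = (a - b) *\<^sub>R (V k - V i) - b *\<^sub>R (V i - V j)"
      by (simp add: algebra_simps)
    then have "norm (a *\<^sub>R (V k - V i) - b *\<^sub>R (V k - V j))
        \<le> \<bar>a - b\<bar> * norm (V k - V i) + \<bar>b\<bar> * norm (V i - V j)"
      by (metis norm_scaleR norm_triangle_ineq4)
    also have "\<dots> \<le> L * norm (X i - X j) * (2 * B) + (\<bar>\<phi> 0\<bar> + L * R) * norm (V i - V j)"
      by (intro add_mono mult_mono ab b \<open>norm (V k - V i) \<le> 2 * B\<close>) (use \<open>0 \<le> L\<close> \<open>0 \<le> \<bar>\<phi> 0\<bar> + L * R\<close> in auto)
    finally show ?thesis unfolding a_def b_def by (simp add: algebra_simps)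
  qed
  then have "(\<Sum>k\<in>K. norm (\<phi> (norm (X i - X k)) *\<^sub>R (V k - V i) - \<phi> (norm (X j - X k)) *\<^sub>R (V k - V j)))
      \<le> card K * (2 * B * L * norm (X i - X j) + (\<bar>\<phi> 0\<bar> + L * R) * norm (V i - V j))"
    by (rule sum_bounded_above)
  then show ?thesis
    by (rule order_trans[rotated]) (simp add: sum_subtractf[symmetric] norm_sum)
qed

locale singular_cs_limit =
  fixes N :: nat and \<alpha> T T0 :: real
    and psin :: "nat \<Rightarrow> real \<Rightarrow> real"
    and x0 v0 :: "nat \<Rightarrow> real ^ 'd"
    and xs vs :: "nat \<Rightarrow> nat \<Rightarrow> real \<Rightarrow> real ^ 'd"
    and \<phi> :: "nat \<Rightarrow> nat"
    and x v :: "nat \<Rightarrow> real \<Rightarrow> real ^ 'd"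
  assumes N: "N \<ge> 1"
    and alpha: "0 < \<alpha>" "\<alpha> < 1"
    and cutoff: "cutoff_family \<alpha> psin"
    and T: "T > 0"
    and init: "\<And>n i. n \<ge> 1 \<Longrightarrow> i < N \<Longrightarrow> xs n i 0 = x0 i \<and> vs n i 0 = v0 i"
    and ode_x: "\<And>n i t. n \<ge> 1 \<Longrightarrow> i < N \<Longrightarrow> t \<in> {0..T} \<Longrightarrow>
                  (xs n i has_vector_derivative vs n i t) (at t within {0..T})"
    and ode_v: "\<And>n i t. n \<ge> 1 \<Longrightarrow> i < N \<Longrightarrow> t \<in> {0..T} \<Longrightarrow>
                  (vs n i has_vector_derivative
                     ((1 / real N) *\<^sub>R (\<Sum>k<N. psin n (norm (xs n i t - xs n k t)) *\<^sub>R (vs n k t - vs n i t))))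
                  (at t within {0..T})"
    and subseq: "strict_mono \<phi>" "\<And>k. \<phi> k \<ge> 1"
    and unif: "\<And>i. i < N \<Longrightarrow> uniform_limit {0..T} (\<lambda>k. xs (\<phi> k) i) (x i) sequentially"
    and T0: "T0 = Inf {t \<in> {0<..T}. \<exists>i<N. \<exists>j\<in>Bset N x0 v0 i.
                          lim (\<lambda>k. norm (xs (\<phi> k) i t - xs (\<phi> k) j t)) = 0}"
    and T0_ne: "{t \<in> {0<..T}. \<exists>i<N. \<exists>j\<in>Bset N x0 v0 i.
                          lim (\<lambda>k. norm (xs (\<phi> k) i t - xs (\<phi> k) j t)) = 0} \<noteq> {}"
    and C1: "\<And>i t. i < N \<Longrightarrow> 0 \<le> t \<Longrightarrow> t < T0 \<Longrightarrow>
               uniform_limit {0..t} (\<lambda>k. vs (\<phi> k) i) (v i) sequentially"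
begin

lemma psin_eq_psi: "2 \<le> n \<Longrightarrow> real (n - 1) powr (-1/\<alpha>) \<le> s \<Longrightarrow> psin n s = psi \<alpha> s"
  using cutoff unfolding cutoff_family_def by auto

lemma psin_eq_n: "1 \<le> n \<Longrightarrow> 0 \<le> s \<Longrightarrow> s \<le> real n powr (-1/\<alpha>) \<Longrightarrow> psin n s = real n"
  using cutoff unfolding cutoff_family_def by auto

lemma psin_nonneg:
  assumes n: "2 \<le> n" and s: "0 \<le> s"
  shows "0 \<le> psin n s"
proof -
  define s\<^sub>0 s\<^sub>1 where "s\<^sub>0 = real n powr (-1/\<alpha>)" and "s\<^sub>1 = real (n - 1) powr (-1/\<alpha>)"
  have psi_nonneg: "0 \<le> psi \<alpha> r" for r by (simp add: psi_def)
  consider "s \<le> s\<^sub>0" | "s\<^sub>1 \<le> s" | "s\<^sub>0 \<le> s" "s \<le> s\<^sub>1" by linarith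
  then show ?thesis
  proof cases
    case 1
    then show ?thesis using psin_eq_n[of n s] n s by (simp add: s\<^sub>0_def)
  next
    case 2
    then show ?thesis using psin_eq_psi[of n s] n psi_nonneg by (simp add: s\<^sub>1_def)
  next
    case 3
    have "monotone_on {s\<^sub>0..s\<^sub>1} (\<le>) (\<ge>) (psin n)"
      using cutoff n unfolding cutoff_family_def s\<^sub>0_def s\<^sub>1_def by auto
    from monotone_onD[OF this, of s s\<^sub>1] have "psin n s\<^sub>1 \<le> psin n s" using 3 by simp
    moreover have "psin n s\<^sub>1 = psi \<alpha> s\<^sub>1" using psin_eq_psi[of n s\<^sub>1] n by (simp add: s\<^sub>1_def)
    ultimately show ?thesis using psi_nonneg[of s\<^sub>1] by simp
  qed
qed

lemma psin_lipschitz: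
  assumes n: "1 \<le> n"
  shows "\<exists>L. L-lipschitz_on {0..R} (psin n)"
proof (rule lipschitz_on_Icc_if_const_near_0)
  have smooth: "smooth_on {0<..} (psin n)" using cutoff n unfolding cutoff_family_def by auto
  have "(deriv ^^ 0) (psin n) differentiable_on {0<..}" "(deriv ^^ 1) (psin n) differentiable_on {0<..}"
    using smooth unfolding smooth_on_def by blast+
  then have "psin n differentiable_on {0<..}" "deriv (psin n) differentiable_on {0<..}"
    by simp_all
  then show "\<And>s. 0 < s \<Longrightarrow> (psin n has_real_derivative deriv (psin n) s) (at s)"
    "continuous_on {0<..} (deriv (psin n))"
    by (auto simp: differentiable_on_eq_differentiable_at DERIV_deriv_iff_real_differentiable
        intro: differentiable_imp_continuous_on)
  show "0 < real n powr (-1/\<alpha>)" using n by simp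
  show "\<And>s. 0 \<le> s \<Longrightarrow> s \<le> real n powr (-1/\<alpha>) \<Longrightarrow> psin n s = psin n (real n powr (-1/\<alpha>))"
    using psin_eq_n n by simp
qed

definition collision_times :: "real set" where
  "collision_times = {t \<in> {0<..T}. \<exists>i<N. \<exists>j\<in>Bset N x0 v0 i.
     lim (\<lambda>k. norm (xs (\<phi> k) i t - xs (\<phi> k) j t)) = 0}"

lemma T0_le_collision_time: "t \<in> collision_times \<Longrightarrow> T0 \<le> t"
  unfolding T0 collision_times_def[symmetric]
  by (rule cInf_lower) (auto simp: collision_times_def intro: bdd_belowI[of _ 0])

lemma T0_le_T: "T0 \<le> T"
  using T0_ne T0_le_collision_time unfolding collision_times_def[symmetric]
  by (force simp: collision_times_def)

lemma xs_continuous_on: "1 \<le> n \<Longrightarrow> i < N \<Longrightarrow> continuous_on {0..T} (xs n i)"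
  using ode_x by (meson continuous_on_eq_continuous_within has_vector_derivative_continuous)

lemma vs_continuous_on: "1 \<le> n \<Longrightarrow> i < N \<Longrightarrow> continuous_on {0..T} (vs n i)"
  using ode_v by (meson continuous_on_eq_continuous_within has_vector_derivative_continuous)

lemma x_continuous_on: "i < N \<Longrightarrow> continuous_on {0..T} (x i)"
  by (rule uniform_limit_theorem[OF _ unif]) (auto intro!: always_eventually xs_continuous_on subseq)

lemma v_continuous_on:
  assumes "i < N" "t < T0"
  shows "continuous_on {0..t} (v i)"
proof (cases "0 \<le> t")
  case True
  have "{0..t} \<subseteq> {0..T}" using assms T0_le_T by auto
  then show ?thesis
    by (intro uniform_limit_theorem[OF _ C1[OF assms(1) True assms(2)]] always_eventually allI
        continuous_on_subset[OF vs_continuous_on] subseq assms(1)) auto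
qed simp

lemma xs_tendsto_x: "i < N \<Longrightarrow> t \<in> {0..T} \<Longrightarrow> (\<lambda>k. xs (\<phi> k) i t) \<longlonglongrightarrow> x i t"
  using tendsto_uniform_limitI[OF unif] by auto

lemma vs_tendsto_v: "i < N \<Longrightarrow> 0 \<le> t \<Longrightarrow> t < T0 \<Longrightarrow> (\<lambda>k. vs (\<phi> k) i t) \<longlonglongrightarrow> v i t"
  using tendsto_uniform_limitI[OF C1] by auto

lemma x_ne_before_T0:
  assumes i: "i < N" and j: "j \<in> Bset N x0 v0 i" and r: "0 < r" "r < T0"
  shows "x i r \<noteq> x j r"
proof
  assume "x i r = x j r"
  have "r \<in> {0..T}" using r T0_le_T by auto
  with i j have "(\<lambda>k. norm (xs (\<phi> k) i r - xs (\<phi> k) j r)) \<longlonglongrightarrow> norm (x i r - x j r)"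
    by (intro tendsto_intros xs_tendsto_x) (auto simp: Bset_def)
  with \<open>x i r = x j r\<close> have "lim (\<lambda>k. norm (xs (\<phi> k) i r - xs (\<phi> k) j r)) = 0"
    by (simp add: limI)
  with i j r T0_le_T have "r \<in> collision_times" by (auto simp: collision_times_def)
  with r show False using T0_le_collision_time by fastforce
qed

lemma eventually_phi_ge: "eventually (\<lambda>k. m \<le> \<phi> k) sequentially"
  using eventually_ge_at_top[of m] by eventually_elim (use strict_mono_imp_increasing[OF subseq(1)] le_trans in blast)

lemma velocity_component_has_derivative:
  assumes "1 \<le> n" "p < N" "t \<in> {0..T}"
  shows "((\<lambda>t. vs n p t $ l) has_real_derivative
     (1 / real N) * (\<Sum>k<N. psin n (norm (xs n p t - xs n k t)) * (vs n k t $ l - vs n p t $ l)))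
     (at t within {0..T})"
  using bounded_linear.has_vector_derivative[OF bounded_linear_vec_nth ode_v[OF assms], of l]
  by (simp add: has_real_derivative_iff_has_vector_derivative sum_component)

lemma sum_velocity_has_derivative_le:
  assumes n: "2 \<le> n" and t: "t \<in> {0..T}" and g: "\<And>u. (g has_real_derivative h u) (at u)"
    and "mono h" and ij: "i < N" "j < N"
  shows "\<exists>D. ((\<lambda>t. \<Sum>p<N. g (vs n p t $ l)) has_real_derivative D) (at t within {0..T}) \<and>
     D \<le> - (psin n (norm (xs n i t - xs n j t)) *
              ((h (vs n i t $ l) - h (vs n j t $ l)) * (vs n i t $ l - vs n j t $ l))) / (2 * N)"
proof -
  define a where "a p k = psin n (norm (xs n p t - xs n k t))" for p k
  define y where "y p = vs n p t $ l" for p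
  define S where "S = (\<Sum>p<N. h (y p) * (\<Sum>k<N. a p k * (y k - y p)))"
  have "((\<lambda>t. \<Sum>p<N. g (vs n p t $ l)) has_real_derivative
      (\<Sum>p<N. h (y p) * ((1 / N) * (\<Sum>k<N. a p k * (y k - y p))))) (at t within {0..T})"
    unfolding a_def y_def
    by (intro DERIV_sum DERIV_chain2[OF g velocity_component_has_derivative]) (use n t in auto)
  moreover have "(\<Sum>p<N. h (y p) * ((1 / N) * (\<Sum>k<N. a p k * (y k - y p)))) = S / N"
    unfolding S_def sum_divide_distrib by (intro sum.cong refl) simp
  moreover have "S \<le> - (a i j * ((h (y i) - h (y j)) * (y i - y j))) / 2"
    unfolding S_def
    by (rule consensus_dissipation[OF _ _ _ \<open>mono h\<close>])
       (use ij n in \<open>auto simp: a_def norm_minus_commute intro: psin_nonneg\<close>)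
  then have "S / N \<le> (- (a i j * ((h (y i) - h (y j)) * (y i - y j))) / 2) / N"
    using N by (intro divide_right_mono) auto
  ultimately show ?thesis unfolding a_def y_def by auto
qed

lemma sum_velocity_antimono:
  assumes "2 \<le> n" and g: "\<And>u. (g has_real_derivative h u) (at u)" and "mono h"
    and "0 \<le> s" "s \<le> t" "t \<le> T"
  shows "(\<Sum>p<N. g (vs n p t $ l)) \<le> (\<Sum>p<N. g (vs n p s $ l))"
proof (rule antimono_if_has_real_derivative_nonpos_within[where a = 0 and b = T
      and f = "\<lambda>t. \<Sum>p<N. g (vs n p t $ l)"])
  fix r assume "r \<in> {0..T}"
  with sum_velocity_has_derivative_le[OF \<open>2 \<le> n\<close> this g \<open>mono h\<close>, of 0 0 l] N
  show "\<exists>D. ((\<lambda>t. \<Sum>p<N. g (vs n p t $ l)) has_real_derivative D) (at r within {0..T}) \<and> D \<le> 0"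
    by simp
qed (use assms in auto)

lemma limit_sum_velocity_antimono:
  assumes g: "\<And>u. (g has_real_derivative h u) (at u)" and "mono h"
    and st: "0 \<le> s" "s \<le> t" "t < T0"
  shows "(\<Sum>p<N. g (v p t $ l)) \<le> (\<Sum>p<N. g (v p s $ l))"
proof -
  have "isCont g u" for u using g DERIV_isCont by blast
  then have "(\<lambda>k. \<Sum>p<N. g (vs (\<phi> k) p r $ l)) \<longlonglongrightarrow> (\<Sum>p<N. g (v p r $ l))"
    if "0 \<le> r" "r < T0" for r
    by (intro tendsto_sum isCont_tendsto_compose[where g = g] tendsto_vec_nth vs_tendsto_v that) auto
  then have lim_s: "(\<lambda>k. \<Sum>p<N. g (vs (\<phi> k) p s $ l)) \<longlonglongrightarrow> (\<Sum>p<N. g (v p s $ l))"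
    and lim_t: "(\<lambda>k. \<Sum>p<N. g (vs (\<phi> k) p t $ l)) \<longlonglongrightarrow> (\<Sum>p<N. g (v p t $ l))"
    using st by auto
  have "eventually (\<lambda>k. (\<Sum>p<N. g (vs (\<phi> k) p t $ l)) \<le> (\<Sum>p<N. g (vs (\<phi> k) p s $ l))) sequentially"
    using eventually_phi_ge[of 2]
    by eventually_elim (rule sum_velocity_antimono[OF _ g \<open>mono h\<close>], use st T0_le_T in auto)
  then show ?thesis by (rule tendsto_le[OF trivial_limit_sequentially lim_s lim_t])
qed

lemma v_component_tendsto:
  assumes "0 < T0" "i < N"
  shows "\<exists>w. ((\<lambda>t. v i t $ l) \<longlongrightarrow> w) (at_left T0)"
proof (rule tendsto_at_left_if_ramp_sums_antimono[where P = "{..<N}" and a = 0])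
  define E where "E = (\<Sum>p<N. (v p 0 $ l)\<^sup>2)"
  have square: "((\<lambda>u. u\<^sup>2) has_real_derivative 2 * u) (at u)" "mono (\<lambda>u::real. 2 * u)" for u :: real
    by (auto intro!: derivative_eq_intros simp: mono_def)
  show "\<bar>v p t $ l\<bar> \<le> sqrt E" if "p \<in> {..<N}" "0 \<le> t" "t < T0" for p t
  proof -
    have "(v p t $ l)\<^sup>2 \<le> (\<Sum>p<N. (v p t $ l)\<^sup>2)"
      using that by (intro member_le_sum) auto
    also have "\<dots> \<le> E"
      unfolding E_def using that by (intro limit_sum_velocity_antimono[OF square]) auto
    finally show ?thesis by (simp add: real_le_rsqrt)
  qed
  show "(\<Sum>p<N. ramp2 c (v p t $ l)) \<le> (\<Sum>p<N. ramp2 c (v p s $ l))"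
    if "0 \<le> s" "s \<le> t" "t < T0" for c s t
    using that by (intro limit_sum_velocity_antimono[OF has_real_derivative_ramp2 mono_ramp2_derivative])
  show "continuous_on {0..t} (\<lambda>t. v p t $ l)" if "p \<in> {..<N}" "t < T0" for p t
    using that by (intro continuous_on_component v_continuous_on) auto
qed (use assms in auto)

lemma v_tendsto:
  assumes "0 < T0" "i < N"
  shows "\<exists>w. (v i \<longlongrightarrow> w) (at_left T0)"
proof -
  obtain w where "\<And>l. ((\<lambda>t. v i t $ l) \<longlongrightarrow> w l) (at_left T0)"
    using v_component_tendsto[OF assms] by metis
  then have "(v i \<longlongrightarrow> (\<chi> l. w l)) (at_left T0)" by (intro vec_tendstoI) simp
  then show ?thesis ..
qed

definition force :: "nat \<Rightarrow> nat \<Rightarrow> real \<Rightarrow> real ^ 'd" where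
  "force n i t = (1 / real N) *\<^sub>R (\<Sum>k<N. psin n (norm (xs n i t - xs n k t)) *\<^sub>R (vs n k t - vs n i t))"

lemma force_diff_le:
  assumes n: "1 \<le> n" and ij: "i < N" "j < N"
  obtains C where "0 \<le> C" and "\<And>t. t \<in> {0..T} \<Longrightarrow>
    norm (force n i t - force n j t) \<le> C * (norm (xs n i t - xs n j t) + norm (vs n i t - vs n j t))"
proof -
  have "\<exists>B. \<forall>k\<in>{..<N}. \<forall>t\<in>{0..T}. norm (vs n k t) \<le> B"
    using vs_continuous_on[OF n] by (intro finite_family_bounded_on_compact) auto
  then obtain B where "\<forall>k\<in>{..<N}. \<forall>t\<in>{0..T}. norm (vs n k t) \<le> B" ..
  then have B: "\<And>k t. k < N \<Longrightarrow> t \<in> {0..T} \<Longrightarrow> norm (vs n k t) \<le> B" by simp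
  have "\<exists>X. \<forall>k\<in>{..<N}. \<forall>t\<in>{0..T}. norm (xs n k t) \<le> X"
    using xs_continuous_on[OF n] by (intro finite_family_bounded_on_compact) auto
  then obtain X where "\<forall>k\<in>{..<N}. \<forall>t\<in>{0..T}. norm (xs n k t) \<le> X" ..
  then have X: "\<And>k t. k < N \<Longrightarrow> t \<in> {0..T} \<Longrightarrow> norm (xs n k t) \<le> X" by simp
  obtain L where L: "L-lipschitz_on {0..2 * X} (psin n)" using psin_lipschitz[OF n] by blast
  define C where "C = 2 * B * L + (real n + L * (2 * X))"
  have "0 \<in> {0..T}" using T by simp
  then have "0 \<le> B" "0 \<le> X"
    using B[OF ij(1)] X[OF ij(1)] norm_ge_zero order_trans by blast+
  have "0 \<le> L" using L by (rule lipschitz_on_nonneg)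
  then have "0 \<le> C" using \<open>0 \<le> B\<close> \<open>0 \<le> X\<close> by (simp add: C_def)
  moreover have "norm (force n i t - force n j t) \<le> C * (norm (xs n i t - xs n j t) + norm (vs n i t - vs n j t))"
    if t: "t \<in> {0..T}" for t
  proof -
    have dist: "norm (xs n p t - xs n k t) \<le> 2 * X" if "p < N" "k < N" for p k
      using norm_triangle_ineq4[of "xs n p t" "xs n k t"] X[OF that(1) t] X[OF that(2) t] by linarith
    have "norm (force n i t - force n j t) = (1 / N) * norm
        ((\<Sum>k<N. psin n (norm (xs n i t - xs n k t)) *\<^sub>R (vs n k t - vs n i t))
          - (\<Sum>k<N. psin n (norm (xs n j t - xs n k t)) *\<^sub>R (vs n k t - vs n j t)))"
      unfolding force_def by (simp flip: scaleR_diff_right)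
    also have "\<dots> \<le> (1 / N) * (N * (2 * B * L * norm (xs n i t - xs n j t)
        + (\<bar>psin n 0\<bar> + L * (2 * X)) * norm (vs n i t - vs n j t)))"
      using interaction_diff_le[of "{..<N}" L "2 * X" "psin n" "\<lambda>k. xs n k t" i j "\<lambda>k. vs n k t" B]
        L dist ij B t by (intro mult_left_mono) auto
    also have "\<dots> \<le> C * (norm (xs n i t - xs n j t) + norm (vs n i t - vs n j t))"
      using N psin_eq_n[OF n, of 0] \<open>0 \<le> B\<close> \<open>0 \<le> L\<close> \<open>0 \<le> X\<close>
      by (simp add: C_def algebra_simps mult_right_mono)
    finally show ?thesis .
  qed
  ultimately show ?thesis using that by blast
qed

lemma vs_eq_if_same_initial_data:
  assumes ij: "i < N" "j < N" and same: "x0 i = x0 j" "v0 i = v0 j" and n: "1 \<le> n"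
    and t: "t \<in> {0..T}"
  shows "vs n i t = vs n j t"
proof -
  obtain C where "0 \<le> C" and C: "\<And>t. t \<in> {0..T} \<Longrightarrow>
      norm (force n i t - force n j t) \<le> C * (norm (xs n i t - xs n j t) + norm (vs n i t - vs n j t))"
    using force_diff_le[OF n ij] by blast
  define u w where "u t = xs n i t - xs n j t" and "w t = vs n i t - vs n j t" for t
  define D where "D t = u t \<bullet> u t + w t \<bullet> w t" for t
  define D' where "D' t = 2 * (u t \<bullet> w t) + 2 * (w t \<bullet> (force n i t - force n j t))" for t
  have "(D has_real_derivative D' r) (at r within {0..T})" if r: "r \<in> {0..T}" for r
  proof -
    have "(u has_vector_derivative w r) (at r within {0..T})"
      "(w has_vector_derivative force n i r - force n j r) (at r within {0..T})"
      unfolding u_def w_def force_def using ode_x[OF n _ r] ode_v[OF n _ r] ij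
      by (auto intro!: has_vector_derivative_diff)
    then show ?thesis
      unfolding D_def D'_def has_real_derivative_iff_has_vector_derivative
      by (auto intro!: has_vector_derivative_add[THEN has_vector_derivative_eq_rhs]
          bounded_bilinear.has_vector_derivative[OF bounded_bilinear_inner] simp: inner_commute)
  qed
  moreover have "D' r \<le> (1 + 3 * C) * D r" if r: "r \<in> {0..T}" for r
  proof -
    define a b where "a = norm (u r)" and "b = norm (w r)"
    have "D' r \<le> 2 * (a * b) + 2 * (b * (C * (a + b)))"
      using norm_cauchy_schwarz[of "u r" "w r"] norm_cauchy_schwarz[of "w r" "force n i r - force n j r"]
        mult_left_mono[OF C[OF r], of b] unfolding D'_def a_def b_def u_def w_def by simp
    also have "\<dots> = (1 + C) * (2 * a * b) + 2 * C * b\<^sup>2" by (simp add: algebra_simps power2_eq_square)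
    also have "\<dots> \<le> (1 + C) * (a\<^sup>2 + b\<^sup>2) + 2 * C * (a\<^sup>2 + b\<^sup>2)"
      using \<open>0 \<le> C\<close> sum_squares_bound[of a b] by (intro add_mono mult_left_mono) auto
    also have "\<dots> = (1 + 3 * C) * D r"
      unfolding D_def a_def b_def by (simp add: power2_norm_eq_inner algebra_simps)
    finally show ?thesis .
  qed
  moreover have "D 0 = 0" using init[OF n ij(1)] init[OF n ij(2)] same by (simp add: D_def u_def w_def)
  ultimately have "D t = 0"
    by (rule gronwall_zero[where a = 0 and b = T, OF _ _ _ _ t]) (auto simp: D_def)
  then show ?thesis by (simp add: D_def w_def add_nonneg_eq_0_iff)
qed

lemma psin_ramp_dissipation_ge:
  assumes n: "2 \<le> n" and small: "real (n - 1) powr (-1/\<alpha>) < \<delta> / 2"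
    and d: "\<delta> \<le> d" "\<bar>d' - d\<bar> < \<delta> / 2" and "0 < \<epsilon>" and ab: "c + \<epsilon> < a" "b < c - \<epsilon>"
  shows "2 * \<epsilon>\<^sup>2 * psi \<alpha> d \<le> psin n d' * ((2 * max (a - c) 0 - 2 * max (b - c) 0) * (a - b))"
proof -
  have "0 < real (n - 1) powr (-1/\<alpha>)" using n by simp
  moreover have "d - \<delta> / 2 < d'" "d' < d + \<delta> / 2" using d(2) abs_less_iff[of "d' - d"] by linarith+
  ultimately have d': "real (n - 1) powr (-1/\<alpha>) \<le> d'" "0 < d'" "d' \<le> 2 * d"
    using small d(1) by linarith+
  have "psi \<alpha> d / 2 \<le> psin n d'"
    using psin_eq_psi[OF n d'(1)] psi_ge_half_if_le_double[OF _ _ d'(2,3)] alpha by simp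
  moreover have "4 * \<epsilon>\<^sup>2 \<le> (2 * max (a - c) 0 - 2 * max (b - c) 0) * (a - b)"
  proof -
    have "(2 * \<epsilon>) * (2 * \<epsilon>) \<le> (2 * (a - c)) * (a - b)"
      using ab \<open>0 < \<epsilon>\<close> by (intro mult_mono) auto
    then show ?thesis using ab \<open>0 < \<epsilon>\<close> by (simp add: power2_eq_square)
  qed
  moreover have "0 \<le> psin n d'" using psin_nonneg[OF n] d'(2) by simp
  ultimately have "psi \<alpha> d / 2 * (4 * \<epsilon>\<^sup>2)
      \<le> psin n d' * ((2 * max (a - c) 0 - 2 * max (b - c) 0) * (a - b))"
    by (rule mult_mono) simp
  then show ?thesis by (simp add: algebra_simps)
qed

lemma ramp_sum_dissipation_le:
  assumes n: "2 \<le> n" and st: "0 \<le> s" "s \<le> t" "t \<le> T" and ij: "i < N" "j < N" and "0 \<le> \<kappa>"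
    and q: "continuous_on {s..t} q"
    and lower: "\<And>r. r \<in> {s..t} \<Longrightarrow> \<kappa> * q r \<le> psin n (norm (xs n i r - xs n j r)) *
        ((2 * max (vs n i r $ l - c) 0 - 2 * max (vs n j r $ l - c) 0) * (vs n i r $ l - vs n j r $ l))"
  shows "(\<Sum>p<N. ramp2 c (vs n p t $ l)) + \<kappa> / (2 * N) * integral {s..t} q
           \<le> (\<Sum>p<N. ramp2 c (vs n p s $ l))"
proof -
  define G where "G r = (\<Sum>p<N. ramp2 c (vs n p r $ l)) + \<kappa> / (2 * N) * integral {s..r} q" for r
  have "G t \<le> G s"
  proof (rule antimono_if_has_real_derivative_nonpos_within[where a = s and b = t and f = G])
    fix r assume r: "r \<in> {s..t}"
    then have "r \<in> {0..T}" using st by auto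
    from sum_velocity_has_derivative_le[OF n this has_real_derivative_ramp2 mono_ramp2_derivative ij]
    obtain D where D: "((\<lambda>t. \<Sum>p<N. ramp2 c (vs n p t $ l)) has_real_derivative D) (at r within {0..T})"
      "D \<le> - (psin n (norm (xs n i r - xs n j r)) * ((2 * max (vs n i r $ l - c) 0
               - 2 * max (vs n j r $ l - c) 0) * (vs n i r $ l - vs n j r $ l))) / (2 * N)"
      by blast
    have "(G has_real_derivative D + \<kappa> / (2 * N) * q r) (at r within {s..t})"
      unfolding G_def using st
      by (intro DERIV_add DERIV_cmult has_field_derivative_subset[OF D(1)]
          integral_has_real_derivative[OF q r]) auto
    moreover have "\<kappa> * q r / (2 * N) \<le> psin n (norm (xs n i r - xs n j r)) * ((2 * max (vs n i r $ l - c) 0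
               - 2 * max (vs n j r $ l - c) 0) * (vs n i r $ l - vs n j r $ l)) / (2 * N)"
      using lower[OF r] by (rule divide_right_mono) simp
    ultimately show "\<exists>D. (G has_real_derivative D) (at r within {s..t}) \<and> D \<le> 0"
      using D(2) by (intro exI[of _ "D + \<kappa> / (2 * N) * q r"]) auto
  qed (use st in auto)
  then show ?thesis by (simp add: G_def)
qed

lemma psi_dist_continuous_on:
  assumes i: "i < N" and j: "j \<in> Bset N x0 v0 i" and ab: "0 < a" "b < T0"
  shows "continuous_on {a..b} (\<lambda>r. psi \<alpha> (norm (x i r - x j r)))"
proof -
  have "j < N" using j by (simp add: Bset_def)
  have "{a..b} \<subseteq> {0..T}" using ab T0_le_T by auto
  then have "continuous_on {a..b} (\<lambda>r. norm (x i r - x j r) powr (- \<alpha>))"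
    using x_ne_before_T0[OF i j] ab
    by (intro continuous_intros continuous_on_subset[OF x_continuous_on] i \<open>j < N\<close>) auto
  then show ?thesis
    by (rule continuous_on_eq) (use x_ne_before_T0[OF i j] ab in \<open>auto simp: psi_def\<close>)
qed

lemma exists_regularized_index_near_limit:
  assumes ij: "i < N" "j < N" and pos: "0 < \<eta>" "0 < \<epsilon>" "0 < \<rho>" and st: "0 \<le> s" "s \<le> t" "t < T0"
  obtains n where "2 \<le> n" "real (n - 1) powr (-1/\<alpha>) < \<rho>"
    and "\<And>r. r \<in> {0..T} \<Longrightarrow> dist (xs n i r) (x i r) < \<eta>"
      "\<And>r. r \<in> {0..T} \<Longrightarrow> dist (xs n j r) (x j r) < \<eta>"
    and "\<And>r. r \<in> {0..t} \<Longrightarrow> dist (vs n i r) (v i r) < \<epsilon>"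
      "\<And>r. r \<in> {0..t} \<Longrightarrow> dist (vs n j r) (v j r) < \<epsilon>"
    and "(\<Sum>p<N. ramp2 c (vs n p s $ l)) < (\<Sum>p<N. ramp2 c (v p s $ l)) + 1"
proof -
  have "(\<lambda>n. real n powr (-1/\<alpha>)) \<longlonglongrightarrow> 0"
    using alpha by (intro tendsto_neg_powr filterlim_real_sequentially) auto
  then have "eventually (\<lambda>n. real n powr (-1/\<alpha>) < \<rho>) sequentially"
    using pos by (intro order_tendstoD(2)) auto
  then obtain M where M: "\<And>n. M \<le> n \<Longrightarrow> real n powr (-1/\<alpha>) < \<rho>"
    by (auto simp: eventually_sequentially)
  have "isCont (ramp2 c) u" for u using has_real_derivative_ramp2 DERIV_isCont by blast
  then have "(\<lambda>k. \<Sum>p<N. ramp2 c (vs (\<phi> k) p s $ l)) \<longlonglongrightarrow> (\<Sum>p<N. ramp2 c (v p s $ l))"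
    using st by (intro tendsto_sum isCont_tendsto_compose[where g = "ramp2 c"] tendsto_vec_nth vs_tendsto_v) auto
  then have "eventually (\<lambda>k. M + 2 \<le> \<phi> k \<and>
      (\<forall>r\<in>{0..T}. dist (xs (\<phi> k) i r) (x i r) < \<eta>) \<and> (\<forall>r\<in>{0..T}. dist (xs (\<phi> k) j r) (x j r) < \<eta>) \<and>
      (\<forall>r\<in>{0..t}. dist (vs (\<phi> k) i r) (v i r) < \<epsilon>) \<and> (\<forall>r\<in>{0..t}. dist (vs (\<phi> k) j r) (v j r) < \<epsilon>) \<and>
      (\<Sum>p<N. ramp2 c (vs (\<phi> k) p s $ l)) < (\<Sum>p<N. ramp2 c (v p s $ l)) + 1) sequentially"
    using st pos
    by (intro eventually_conj eventually_phi_ge uniform_limitD[OF unif] uniform_limitD[OF C1]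
        order_tendstoD(2) ij) auto
  then obtain k where "M + 2 \<le> \<phi> k"
      "\<forall>r\<in>{0..T}. dist (xs (\<phi> k) i r) (x i r) < \<eta>" "\<forall>r\<in>{0..T}. dist (xs (\<phi> k) j r) (x j r) < \<eta>"
      "\<forall>r\<in>{0..t}. dist (vs (\<phi> k) i r) (v i r) < \<epsilon>" "\<forall>r\<in>{0..t}. dist (vs (\<phi> k) j r) (v j r) < \<epsilon>"
      "(\<Sum>p<N. ramp2 c (vs (\<phi> k) p s $ l)) < (\<Sum>p<N. ramp2 c (v p s $ l)) + 1"
    using eventually_happens'[OF sequentially_bot] by blast
  with M[of "\<phi> k - 1"] show ?thesis by (intro that[of "\<phi> k"]) auto
qed

lemma psi_integral_bounded_if_velocities_apart:
  assumes i: "i < N" and j: "j \<in> Bset N x0 v0 i" and "0 < \<epsilon>"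
    and st: "0 < s" "s < t" "t < T0"
    and vi: "\<And>r. r \<in> {s..t} \<Longrightarrow> c + 2 * \<epsilon> < v i r $ l"
    and vj: "\<And>r. r \<in> {s..t} \<Longrightarrow> v j r $ l < c - 2 * \<epsilon>"
  shows "integral {s..t} (\<lambda>r. psi \<alpha> (norm (x i r - x j r)))
           \<le> N * ((\<Sum>p<N. ramp2 c (v p s $ l)) + 1) / \<epsilon>\<^sup>2"
proof -
  have "j < N" using j by (simp add: Bset_def)
  define d where "d r = norm (x i r - x j r)" for r
  have "t \<le> T" using st T0_le_T by simp
  have "continuous_on {s..t} d"
    unfolding d_def using st \<open>t \<le> T\<close>
    by (intro continuous_intros continuous_on_subset[OF x_continuous_on] i \<open>j < N\<close>) auto
  moreover have "{s..t} \<noteq> {}" using st by simp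
  ultimately obtain r\<^sub>0 where r\<^sub>0: "r\<^sub>0 \<in> {s..t}" "\<And>r. r \<in> {s..t} \<Longrightarrow> d r\<^sub>0 \<le> d r"
    using continuous_attains_inf[OF compact_Icc] by blast
  define \<delta> where "\<delta> = d r\<^sub>0"
  have "0 < \<delta>" using x_ne_before_T0[OF i j] r\<^sub>0(1) st by (auto simp: \<delta>_def d_def)
  then obtain n where "2 \<le> n" and small: "real (n - 1) powr (-1/\<alpha>) < \<delta> / 2"
      and x_close: "\<And>r. r \<in> {0..T} \<Longrightarrow> dist (xs n i r) (x i r) < \<delta> / 4"
        "\<And>r. r \<in> {0..T} \<Longrightarrow> dist (xs n j r) (x j r) < \<delta> / 4"
      and v_close: "\<And>r. r \<in> {0..t} \<Longrightarrow> dist (vs n i r) (v i r) < \<epsilon>"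
        "\<And>r. r \<in> {0..t} \<Longrightarrow> dist (vs n j r) (v j r) < \<epsilon>"
      and P_close: "(\<Sum>p<N. ramp2 c (vs n p s $ l)) < (\<Sum>p<N. ramp2 c (v p s $ l)) + 1"
    using exists_regularized_index_near_limit[OF i \<open>j < N\<close> _ \<open>0 < \<epsilon>\<close>, of "\<delta> / 4" "\<delta> / 2" s t] st
    by auto
  have lower: "2 * \<epsilon>\<^sup>2 * psi \<alpha> (d r) \<le> psin n (norm (xs n i r - xs n j r)) *
      ((2 * max (vs n i r $ l - c) 0 - 2 * max (vs n j r $ l - c) 0) * (vs n i r $ l - vs n j r $ l))"
    if r: "r \<in> {s..t}" for r
  proof (rule psin_ramp_dissipation_ge[OF \<open>2 \<le> n\<close> small _ _ \<open>0 < \<epsilon>\<close>])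
    show "\<delta> \<le> d r" using r\<^sub>0(2)[OF r] by (simp add: \<delta>_def)
    have "r \<in> {0..T}" "r \<in> {0..t}" using r st \<open>t \<le> T\<close> by auto
    show "\<bar>norm (xs n i r - xs n j r) - d r\<bar> < \<delta> / 2"
      using abs_norm_diff_diff_le[of "xs n i r" "xs n j r" "x i r" "x j r"] x_close \<open>r \<in> {0..T}\<close>
      unfolding d_def dist_norm by fastforce
    show "c + \<epsilon> < vs n i r $ l" "vs n j r $ l < c - \<epsilon>"
      using v_close[OF \<open>r \<in> {0..t}\<close>] vi[OF r] vj[OF r]
        component_le_norm_cart[of "vs n i r - v i r" l] component_le_norm_cart[of "vs n j r - v j r" l]
      unfolding dist_norm by (auto simp: abs_less_iff)
  qed
  have "(\<Sum>p<N. ramp2 c (vs n p t $ l)) + 2 * \<epsilon>\<^sup>2 / (2 * N) * integral {s..t} (\<lambda>r. psi \<alpha> (d r))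
      \<le> (\<Sum>p<N. ramp2 c (vs n p s $ l))"
    using st \<open>t \<le> T\<close> psi_dist_continuous_on[OF i j st(1,3)]
    by (intro ramp_sum_dissipation_le[OF \<open>2 \<le> n\<close> _ _ _ i \<open>j < N\<close> _ _ lower]) (auto simp: d_def)
  moreover have "0 \<le> (\<Sum>p<N. ramp2 c (vs n p t $ l))" by (intro sum_nonneg ramp2_nonneg)
  ultimately have "\<epsilon>\<^sup>2 / N * integral {s..t} (\<lambda>r. psi \<alpha> (d r)) \<le> (\<Sum>p<N. ramp2 c (v p s $ l)) + 1"
    using P_close by simp
  then show ?thesis
    using N \<open>0 < \<epsilon>\<close> by (simp add: d_def field_simps)
qed

lemma psi_integral_finite_if_limits_differ:
  assumes "0 < T0" and i: "i < N" and j: "j \<in> Bset N x0 v0 i"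
    and wi: "((\<lambda>t. v i t $ l) \<longlongrightarrow> wi) (at_left T0)"
    and wj: "((\<lambda>t. v j t $ l) \<longlongrightarrow> wj) (at_left T0)"
    and "wj < wi"
  shows "\<exists>s\<in>{0..<T0}. (\<integral>\<^sup>+ r\<in>{s..T0}. ennreal (psi \<alpha> (norm (x i r - x j r))) \<partial>lborel) \<noteq> \<infinity>"
proof -
  define c \<epsilon> where "c = (wi + wj) / 2" and "\<epsilon> = (wi - wj) / 6"
  have "0 < \<epsilon>" using \<open>wj < wi\<close> by (simp add: \<epsilon>_def)
  have "c + 2 * \<epsilon> < wi" "wj < c - 2 * \<epsilon>" using \<open>wj < wi\<close> by (simp_all add: c_def \<epsilon>_def field_simps)
  then have "eventually (\<lambda>t. c + 2 * \<epsilon> < v i t $ l \<and> v j t $ l < c - 2 * \<epsilon>) (at_left T0)"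
    by (intro eventually_conj order_tendstoD(1)[OF wi] order_tendstoD(2)[OF wj])
  then obtain s\<^sub>1 where "s\<^sub>1 < T0"
    and apart: "\<And>t. s\<^sub>1 < t \<Longrightarrow> t < T0 \<Longrightarrow> c + 2 * \<epsilon> < v i t $ l \<and> v j t $ l < c - 2 * \<epsilon>"
    unfolding eventually_at_left_field by blast
  define s where "s = (max s\<^sub>1 0 + T0) / 2"
  have s: "0 < s" "s < T0" "s\<^sub>1 < s" using \<open>s\<^sub>1 < T0\<close> \<open>0 < T0\<close> by (auto simp: s_def)
  have "(\<integral>\<^sup>+ r\<in>{s..T0}. ennreal (psi \<alpha> (norm (x i r - x j r))) \<partial>lborel) \<noteq> \<infinity>"
  proof (rule nn_integral_Icc_finite_if_bounded_integrals[OF s(2)])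
    show "0 \<le> psi \<alpha> (norm (x i r - x j r))" for r by (simp add: psi_def)
    fix t assume t: "s < t" "t < T0"
    show "continuous_on {s..t} (\<lambda>r. psi \<alpha> (norm (x i r - x j r)))"
      by (rule psi_dist_continuous_on[OF i j s(1) t(2)])
    show "integral {s..t} (\<lambda>r. psi \<alpha> (norm (x i r - x j r)))
        \<le> N * ((\<Sum>p<N. ramp2 c (v p s $ l)) + 1) / \<epsilon>\<^sup>2"
      using apart s t by (intro psi_integral_bounded_if_velocities_apart[OF i j \<open>0 < \<epsilon>\<close> s(1) t]) auto
  qed
  then show ?thesis using s by auto
qed

lemma dotsim_imp_equal_limits:
  assumes "0 < T0" and pq: "(p, q) \<in> dotsim N \<alpha> x0 v0 x T0"
    and wp: "(v p \<longlongrightarrow> wp) (at_left T0)" and wq: "(v q \<longlongrightarrow> wq) (at_left T0)"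
  shows "wp = wq"
proof (cases "q \<in> Bset N x0 v0 p")
  case False
  have "p < N" "q < N" using pq by (simp_all add: dotsim_def)
  with False have "x0 p = x0 q" "v0 p = v0 q" by (auto simp: Bset_def)
  then have "vs (\<phi> k) p t = vs (\<phi> k) q t" if "0 \<le> t" "t < T0" for k t
    using subseq(2) that T0_le_T \<open>p < N\<close> \<open>q < N\<close> by (intro vs_eq_if_same_initial_data) auto
  then have "v p t = v q t" if "0 \<le> t" "t < T0" for t
    using LIMSEQ_unique vs_tendsto_v[OF \<open>p < N\<close> that] vs_tendsto_v[OF \<open>q < N\<close> that] that by force
  then have "eventually (\<lambda>t. v p t = v q t) (at_left T0)"
    unfolding eventually_at_left_field using \<open>0 < T0\<close> by (intro exI[of _ 0]) auto
  then have "(v q \<longlongrightarrow> wp) (at_left T0)" using wp by (rule Lim_transform_eventually[rotated])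
  then show ?thesis using wq tendsto_unique[OF trivial_limit_at_left_real] by blast
next
  case True
  then have "p < N" and infinite:
    "\<And>s. s \<in> {0..<T0} \<Longrightarrow> (\<integral>\<^sup>+ r\<in>{s..T0}. ennreal (psi \<alpha> (norm (x p r - x q r))) \<partial>lborel) = \<infinity>"
    using pq by (auto simp: dotsim_def)
  show ?thesis
  proof (rule ccontr)
    assume "wp \<noteq> wq"
    then obtain l where "wp $ l \<noteq> wq $ l" by (auto simp: vec_eq_iff)
    have lim: "((\<lambda>t. v p t $ l) \<longlongrightarrow> wp $ l) (at_left T0)" "((\<lambda>t. v q t $ l) \<longlongrightarrow> wq $ l) (at_left T0)"
      using wp wq by (auto intro: tendsto_vec_nth)
    have "q < N" "p \<in> Bset N x0 v0 q" using True \<open>p < N\<close> by (auto simp: Bset_def)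
    consider "wq $ l < wp $ l" | "wp $ l < wq $ l" using \<open>wp $ l \<noteq> wq $ l\<close> by linarith
    then show False
    proof cases
      case 1
      with psi_integral_finite_if_limits_differ[OF \<open>0 < T0\<close> \<open>p < N\<close> True lim]
      show False using infinite by blast
    next
      case 2
      with psi_integral_finite_if_limits_differ[OF \<open>0 < T0\<close> \<open>q < N\<close> \<open>p \<in> Bset N x0 v0 q\<close> lim(2,1)]
      show False using infinite by (simp add: norm_minus_commute)
    qed
  qed
qed

theorem velocity_limits_agree_on_class:
  "\<forall>i<N. \<exists>vbar. \<forall>j\<in>eqclass N \<alpha> x0 v0 x T0 i. (v j \<longlongrightarrow> vbar) (at T0 within {0..<T0})"
proof (cases "0 < T0")
  case False
  then have "{0..<T0} = {}" by simp
  then show ?thesis by simp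
next
  case True
  define D where "D = dotsim N \<alpha> x0 v0 x T0"
  obtain w where w: "\<And>p. p < N \<Longrightarrow> (v p \<longlongrightarrow> w p) (at_left T0)"
    using v_tendsto[OF True] by metis
  have "w p = w q" if "(p, q) \<in> (D \<union> D\<inverse>)\<^sup>*" for p q
    using that
  proof (induction rule: rtrancl_induct)
    case (step y z)
    then have "y < N" "z < N" by (auto simp: D_def dotsim_def)
    with step dotsim_imp_equal_limits[OF True _ w w] show ?case by (auto simp: D_def)
  qed simp
  then have "(v j \<longlongrightarrow> w i) (at_left T0)" if "j \<in> eqclass N \<alpha> x0 v0 x T0 i" for i j
    using that w by (auto simp: eqclass_def D_def[symmetric])
  then show ?thesis unfolding at_within_Ico_at_left[OF True] by blast
qed

end

theorem corollary2p3:
  fixes N :: nat and \<alpha> T T0 :: real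
    and psin :: "nat \<Rightarrow> real \<Rightarrow> real"
    and x0 v0 :: "nat \<Rightarrow> real ^ 'd"
    and xs vs :: "nat \<Rightarrow> nat \<Rightarrow> real \<Rightarrow> real ^ 'd"
    and \<phi> :: "nat \<Rightarrow> nat"
    and x v :: "nat \<Rightarrow> real \<Rightarrow> real ^ 'd"
  assumes N: "N \<ge> 1"
    and alpha: "0 < \<alpha>" "\<alpha> < 1"
    and cutoff: "cutoff_family \<alpha> psin"
    and T: "T > 0"
    and init: "\<And>n i. n \<ge> 1 \<Longrightarrow> i < N \<Longrightarrow> xs n i 0 = x0 i \<and> vs n i 0 = v0 i"
    and ode_x: "\<And>n i t. n \<ge> 1 \<Longrightarrow> i < N \<Longrightarrow> t \<in> {0..T} \<Longrightarrow>
                  (xs n i has_vector_derivative vs n i t) (at t within {0..T})"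
    and ode_v: "\<And>n i t. n \<ge> 1 \<Longrightarrow> i < N \<Longrightarrow> t \<in> {0..T} \<Longrightarrow>
                  (vs n i has_vector_derivative
                     ((1 / real N) *\<^sub>R (\<Sum>k<N. psin n (norm (xs n i t - xs n k t)) *\<^sub>R (vs n k t - vs n i t))))
                  (at t within {0..T})"
    and subseq: "strict_mono \<phi>" "\<And>k. \<phi> k \<ge> 1"
    and unif: "\<And>i. i < N \<Longrightarrow> uniform_limit {0..T} (\<lambda>k. xs (\<phi> k) i) (x i) sequentially"
    and T0: "T0 = Inf {t \<in> {0<..T}. \<exists>i<N. \<exists>j\<in>Bset N x0 v0 i.
                          lim (\<lambda>k. norm (xs (\<phi> k) i t - xs (\<phi> k) j t)) = 0}"
    and T0_ne: "{t \<in> {0<..T}. \<exists>i<N. \<exists>j\<in>Bset N x0 v0 i.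
                          lim (\<lambda>k. norm (xs (\<phi> k) i t - xs (\<phi> k) j t)) = 0} \<noteq> {}"
    and C1: "\<And>i t. i < N \<Longrightarrow> 0 \<le> t \<Longrightarrow> t < T0 \<Longrightarrow>
               uniform_limit {0..t} (\<lambda>k. vs (\<phi> k) i) (v i) sequentially"
    and vdef: "\<And>i t. i < N \<Longrightarrow> t \<in> {0..<T0} \<Longrightarrow>
               (x i has_vector_derivative v i t) (at t within {0..<T0})"
  shows "\<forall>i<N. \<exists>vbar. \<forall>j\<in>eqclass N \<alpha> x0 v0 x T0 i.
            (v j \<longlongrightarrow> vbar) (at T0 within {0..<T0})"
proof -
  interpret singular_cs_limit N \<alpha> T T0 psin x0 v0 xs vs \<phi> x v
    by unfold_locales (fact N alpha cutoff T init ode_x ode_v subseq unif T0 T0_ne C1)+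
  show ?thesis by (rule velocity_limits_agree_on_class)
qed

end
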